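(* Let $s\ge 3$, $b\ge1$, $n=sb$ and $V=\mathbb{F}_2^n=V_1\oplus\cdots\oplus V_b$ with $V_j\cong\mathbb{F}_2^s$ (the $j$-th block of $s$ consecutive coordinates). Let $\mathbf{b}\in\mathbb{F}_2^{s-2}$ be nonzero, let $\circ_{\mathbf b}$ be the operation on $\mathbb{F}_2^s$ given by $$x\circ_{\mathbf b} y=x+y+(x_1y_2+x_2y_1)\,(0,0,\mathbf{b}),$$ and let $\circ$ be the parallel operation on $V$ applying $\circ_{\mathbf b}$ on each block $V_j$. Let $\lambda\in\mathbb{F}_2^{n\times n}$ (acting on row vectors by $x\mapsto x\lambda$), and write $\lambda$ in $b\times b$ blocks of size $s\times s$, the $(i,j)$ block being further partitioned as $\begin{pmatrix}A_{ij}&B_{ij}\\ C_{ij}&D_{ij}\end{pmatrix}$ with $A_{ij}\in\mathbb{F}_2^{2\times2}$, $B_{ij}\in\mathbb{F}_2^{2\times(s-2)}$, $C_{ij}\in\mathbb{F}_2^{(s-2)\times2}$, $D_{ij}\in\mathbb{F}_2^{(s-2)\times(s-2)}$. Then $\lambda\in H_\circ$ if and only if: (1) for each block-row index $i$ there is exactly one $j$ with $A_{ij}\neq0$, and for each block-column index $j$ exactly one $i$ with $A_{ij}\ne 0$; moreover every nonzero $A_{ij}$ is invertible; (2) $B_{ij}$ are arbitrary; (3) $C_{ij}=0$ for all $i,j$; (4) for all $i,j$: if $A_{ij}=0$ then $\mathbf{b}D_{ij}=\mathbf{0}$, and if $A_{ij}$ is invertible then $\mathbf{b}D_{ij}=\mathbf{b}$;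 moreover the $b(s-2)\times b(s-2)$ matrix $D=(D_{ij})_{i,j}$ is invertible.
   Context: $+$ is xor on $V$. For an operation $\circ$ on $V$ making $(V,\circ)$ an elementary abelian $2$-group whose translations $x\mapsto x\circ a$ are xor-affine, $H_\circ$ denotes the group of maps $f\in\mathrm{GL}(V,+)$ such that $(a\circ b)f=af\circ bf$ for all $a,b\in V$ (maps written in postfix notation). The operation $\circ_{\mathbf b}$ is an alternative operation on $\mathbb{F}_2^s$ whose weak key space $\{k: x\circ_{\mathbf b}k=x+k\ \forall x\}$ is spanned by the last $s-2$ canonical vectors. *)

theory Defs
  imports "HOL-Library.Z2" "Jordan_Normal_Form.Matrix"
begin

text \<open>The field F_2 is the type bit; vectors/matrices are Jordan_Normal_Form
  vectors and matrices with explicit dimensions. Indices are 0-based.\<close>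

definition row_mult :: "'a :: semiring_0 vec \<Rightarrow> 'a mat \<Rightarrow> 'a vec" where
  "row_mult x M = vec (dim_col M) (\<lambda>j. x \<bullet> col M j)"

definition circ_b :: "nat \<Rightarrow> bit vec \<Rightarrow> bit vec \<Rightarrow> bit vec \<Rightarrow> bit vec" where
  "circ_b s bb x y = x + y + (x $ 0 * y $ 1 + x $ 1 * y $ 0) \<cdot>\<^sub>v
      vec s (\<lambda>k. if k < 2 then 0 else bb $ (k - 2))"

definition block :: "nat \<Rightarrow> nat \<Rightarrow> 'a vec \<Rightarrow> 'a vec" where
  "block s j x = vec s (\<lambda>r. x $ (j * s + r))"

definition par_circ :: "nat \<Rightarrow> nat \<Rightarrow> bit vec \<Rightarrow> bit vec \<Rightarrow> bit vec \<Rightarrow> bit vec" where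
  "par_circ s b bb x y = vec (s * b)
     (\<lambda>k. circ_b s bb (block s (k div s) x) (block s (k div s) y) $ (k mod s))"

definition H_circ :: "'a :: ab_group_add vec set \<Rightarrow> ('a vec \<Rightarrow> 'a vec \<Rightarrow> 'a vec)
     \<Rightarrow> ('a vec \<Rightarrow> 'a vec) set" where
  "H_circ V op = {f. bij_betw f V V
      \<and> (\<forall>a\<in>V. \<forall>c\<in>V. f (a + c) = f a + f c)
      \<and> (\<forall>a\<in>V. \<forall>c\<in>V. f (op a c) = op (f a) (f c))}"

definition blkA :: "nat \<Rightarrow> 'a mat \<Rightarrow> nat \<Rightarrow> nat \<Rightarrow> 'a mat" where
  "blkA s M i j = mat 2 2 (\<lambda>(r, c). M $$ (i * s + r, j * s + c))"
definition blkB :: "nat \<Rightarrow> 'a mat \<Rightarrow> nat \<Rightarrow> nat \<Rightarrow> 'a mat" where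
  "blkB s M i j = mat 2 (s - 2) (\<lambda>(r, c). M $$ (i * s + r, j * s + 2 + c))"
definition blkC :: "nat \<Rightarrow> 'a mat \<Rightarrow> nat \<Rightarrow> nat \<Rightarrow> 'a mat" where
  "blkC s M i j = mat (s - 2) 2 (\<lambda>(r, c). M $$ (i * s + 2 + r, j * s + c))"
definition blkD :: "nat \<Rightarrow> 'a mat \<Rightarrow> nat \<Rightarrow> nat \<Rightarrow> 'a mat" where
  "blkD s M i j = mat (s - 2) (s - 2) (\<lambda>(r, c). M $$ (i * s + 2 + r, j * s + 2 + c))"

definition fullD :: "nat \<Rightarrow> nat \<Rightarrow> 'a mat \<Rightarrow> 'a mat" where
  "fullD s b M = mat (b * (s - 2)) (b * (s - 2))
     (\<lambda>(r, c). blkD s M (r div (s - 2)) (c div (s - 2)) $$ (r mod (s - 2), c mod (s - 2)))"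

end

theory Submission
  imports Defs "Jordan_Normal_Form.Determinant"
begin

text \<open>Write \<open>x \<circ> y = x + y + \<Sum>\<^sub>i \<omega>\<^sub>i(x,y) e\<^sub>i\<close>, where \<open>\<omega>\<^sub>i(x,y) = x\<^sub>1y\<^sub>2 + x\<^sub>2y\<^sub>1\<close> is the
  determinant of the first two coordinates of \<open>x\<close> and \<open>y\<close> in block \<open>i\<close>, and \<open>e\<^sub>i\<close> is \<open>(0,0,b)\<close>
  placed in block \<open>i\<close>. For linear \<open>\<lambda>\<close> the homomorphism condition reads
  \<open>\<Sum>\<^sub>i \<omega>\<^sub>i(x,y) e\<^sub>i\<lambda> = \<Sum>\<^sub>k \<omega>\<^sub>k(x\<lambda>,y\<lambda>) e\<^sub>k\<close>. Testing it on pairs of unit vectors shows that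
  every \<open>2 \<times> 2\<close> minor of \<open>\<lambda>\<close> in the columns \<open>ks, ks+1\<close> vanishes unless its rows are a pair
  \<open>is, is+1\<close>, and that \<open>e\<^sub>i\<lambda> = \<Sum>\<^sub>k det(A\<^sub>i\<^sub>k) e\<^sub>k\<close>. As \<open>\<lambda>\<close> is invertible, the columns
  \<open>ks, ks+1\<close> have a nonzero minor; hence they vanish outside the rows \<open>is, is+1\<close> of a single
  block \<open>i\<close>, and \<open>A\<^sub>i\<^sub>k\<close> is invertible. This gives \<open>C = 0\<close> and one nonzero \<open>A\<close> per block column;
  the block row is unique too, since three columns supported on two rows are dependent.
  Vectors supported on the \<open>D\<close>-coordinates are then mapped through \<open>D\<close>, so \<open>D\<close> is invertible.
  Conversely, these conditions give \<open>\<omega>\<^sub>k(x\<lambda>,y\<lambda>) = det(A\<^sub>i\<^sub>k) \<omega>\<^sub>i(x,y)\<close> for the unique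
  nonzero \<open>A\<^sub>i\<^sub>k\<close>, which matches \<open>e\<^sub>i\<lambda>\<close>, and a vector in the kernel of \<open>\<lambda>\<close> first loses its
  \<open>A\<close>-coordinates and then its \<open>D\<close>-coordinates.\<close>

text \<open>Keep \<open>F\<^sub>2\<close>-arithmetic as ring arithmetic instead of rewriting it to \<open>xor\<close> and \<open>and\<close>.\<close>

declare add_bit_eq_xor [simp del] mult_bit_eq_and [simp del]

lemma det_2:
  assumes M: "(M :: 'a :: comm_ring_1 mat) \<in> carrier_mat 2 2"
  shows "det M = M $$ (0,0) * M $$ (1,1) - M $$ (0,1) * M $$ (1,0)"
proof -
  have "det M = (\<Sum>j<2. M $$ (0,j) * cofactor M 0 j)"
    by (rule laplace_expansion_row[OF M]) simp
  also have "\<dots> = M $$ (0,0) * M $$ (1,1) - M $$ (0,1) * M $$ (1,0)"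
    using M by (simp add: numeral_2_eq_2 cofactor_def det_single mat_delete_def)
  finally show ?thesis .
qed

lemma invertible_mat_iff_det:
  assumes A: "(A :: 'a :: field mat) \<in> carrier_mat n n"
  shows "invertible_mat A \<longleftrightarrow> det A \<noteq> 0"
proof
  assume "invertible_mat A"
  then obtain B where AB: "A * B = 1\<^sub>m n" and BA: "B * A = 1\<^sub>m (dim_row B)"
    using A unfolding invertible_mat_def inverts_mat_def by auto
  have B: "B \<in> carrier_mat n n"
    using A AB BA by (metis carrier_matD(2) carrier_matI index_mult_mat(2,3) index_one_mat(2,3))
  have "det A * det B = 1"
    using det_mult[OF A B] AB by simp
  then show "det A \<noteq> 0" by auto
next
  assume "det A \<noteq> 0"
  from det_non_zero_imp_unit[OF A this, unfolded Units_def, of "()"]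
  obtain B where "B \<in> carrier_mat n n" "B * A = 1\<^sub>m n" "A * B = 1\<^sub>m n"
    by (auto simp: ring_mat_def)
  then show "invertible_mat A"
    using A unfolding invertible_mat_def inverts_mat_def by auto
qed

lemma invertible_mat_2_bit:
  assumes M: "(M :: bit mat) \<in> carrier_mat 2 2"
  shows "invertible_mat M \<longleftrightarrow> M $$ (0,0) * M $$ (1,1) + M $$ (0,1) * M $$ (1,0) = 1"
  using invertible_mat_iff_det[OF M] det_2[OF M] by simp

lemma row_mult_eq_transpose_mult_mat_vec:
  fixes A :: "'a :: comm_semiring_0 mat"
  assumes "dim_vec u = dim_row A"
  shows "row_mult u A = transpose_mat A *\<^sub>v u"
  using assms unfolding row_mult_def mult_mat_vec_def
  by (intro eq_vecI) (auto simp: scalar_prod_def mult.commute intro!: sum.cong)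

lemma invertible_mat_iff_row_mult_inj:
  assumes A: "(A :: 'a :: field mat) \<in> carrier_mat n n"
  shows "invertible_mat A \<longleftrightarrow> (\<forall>u \<in> carrier_vec n. row_mult u A = 0\<^sub>v n \<longrightarrow> u = 0\<^sub>v n)"
proof -
  have At: "transpose_mat A \<in> carrier_mat n n" using A by simp
  have "invertible_mat A \<longleftrightarrow> det (transpose_mat A) \<noteq> 0"
    using invertible_mat_iff_det[OF A] det_transpose[OF A] by simp
  also have "\<dots> \<longleftrightarrow> (\<forall>u \<in> carrier_vec n. transpose_mat A *\<^sub>v u = 0\<^sub>v n \<longrightarrow> u = 0\<^sub>v n)"
    using det_0_iff_vec_prod_zero[OF At] by auto
  also have "\<dots> \<longleftrightarrow> (\<forall>u \<in> carrier_vec n. row_mult u A = 0\<^sub>v n \<longrightarrow> u = 0\<^sub>v n)"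
    using A by (simp add: row_mult_eq_transpose_mult_mat_vec)
  finally show ?thesis .
qed

lemma invertible_mat_mult_vec_eq_zero:
  assumes A: "(A :: 'a :: field mat) \<in> carrier_mat n n" and "invertible_mat A"
    and "w \<in> carrier_vec n" and "A *\<^sub>v w = 0\<^sub>v n"
  shows "w = 0\<^sub>v n"
  using assms det_0_iff_vec_prod_zero[OF A] invertible_mat_iff_det[OF A] by blast

lemma mult_mat_vec_nth_support:
  fixes A :: "'a :: semiring_0 mat"
  assumes "A \<in> carrier_mat nr nc" "w \<in> carrier_vec nc" "q < nr" "S \<subseteq> {..<nc}"
    and "\<And>m. m < nc \<Longrightarrow> m \<notin> S \<Longrightarrow> w $ m = 0"
  shows "(A *\<^sub>v w) $ q = (\<Sum>m\<in>S. A $$ (q, m) * w $ m)"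
proof -
  have "(A *\<^sub>v w) $ q = (\<Sum>m<nc. A $$ (q, m) * w $ m)"
    using assms(1-3) by (simp add: scalar_prod_def lessThan_atLeast0)
  also have "\<dots> = (\<Sum>m\<in>S. A $$ (q, m) * w $ m)"
    using assms(4,5) by (intro sum.mono_neutral_right) auto
  finally show ?thesis .
qed

lemma zero_smult_vec: "(v :: 'a :: semiring_0 vec) \<in> carrier_vec n \<Longrightarrow> 0 \<cdot>\<^sub>v v = 0\<^sub>v n"
  by (intro eq_vecI) auto

lemma finite_carrier_vec:
  assumes "finite (UNIV :: 'a set)"
  shows "finite (carrier_vec n :: 'a vec set)"
proof -
  have "carrier_vec n \<subseteq> vec_of_list ` {xs :: 'a list. set xs \<subseteq> UNIV \<and> length xs = n}"
  proof
    fix v :: "'a vec" assume "v \<in> carrier_vec n"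
    then show "v \<in> vec_of_list ` {xs. set xs \<subseteq> UNIV \<and> length xs = n}"
      by (intro image_eqI[of _ _ "list_of_vec v"]) (auto simp: vec_list)
  qed
  moreover have "finite {xs :: 'a list. set xs \<subseteq> UNIV \<and> length xs = n}"
    using assms by (rule finite_lists_length_eq)
  ultimately show ?thesis by (meson finite_surj)
qed

lemma sum_lessThan_mult_blocks:
  fixes k b :: nat
  shows "(\<Sum>p<k * b. g p) = (\<Sum>i<b. \<Sum>r<k. g (i * k + r))"
proof -
  have "(\<Sum>p<k * b. g p) = (\<Sum>i<b. sum g {i * k..<i * k + k})"
    using sum.nat_group[of g k b] by (simp add: mult.commute)
  also have "\<dots> = (\<Sum>i<b. \<Sum>r<k. g (i * k + r))"
  proof (rule sum.cong[OF refl])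
    fix i
    have "sum g {0 + i * k..<k + i * k} = (\<Sum>r = 0..<k. g (r + i * k))"
      by (rule sum.shift_bounds_nat_ivl)
    then show "sum g {i * k..<i * k + k} = (\<Sum>r<k. g (i * k + r))"
      by (simp add: lessThan_atLeast0 add.commute)
  qed
  finally show ?thesis .
qed

lemma sum_lessThan_drop_first_two:
  fixes k :: nat
  shows "2 \<le> k \<Longrightarrow> (\<Sum>r<k. g r) = g 0 + g 1 + (\<Sum>t<k - 2. g (t + 2))"
proof -
  assume "2 \<le> k"
  then obtain j where k: "k = Suc (Suc j)" by (metis add_2_eq_Suc le_Suc_ex)
  show ?thesis
    unfolding k sum.lessThan_Suc_shift by (simp del: sum.lessThan_Suc add: add.assoc)
qed

lemma bit_add_eq_0_iff: "(x :: bit) + y = 0 \<longleftrightarrow> x = y"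
  by (cases x; cases y) simp_all

lemma finite_UNIV_bit: "finite (UNIV :: bit set)"
proof (rule finite_subset)
  show "(UNIV :: bit set) \<subseteq> {0, 1}" by (auto intro: bit.exhaust)
qed simp

text \<open>Determinant identities over \<open>F\<^sub>2\<close>, where \<open>ad - bc = ad + bc\<close>.\<close>

lemma bit_det2_mult:
  fixes a0 a1 c0 c1 p q r t :: bit
  shows "(a0*p + a1*r) * (c0*q + c1*t) + (a0*q + a1*t) * (c0*p + c1*r)
         = (a0*c1 + a1*c0) * (p*t + q*r)"
  by (cases a0; cases a1; cases c0; cases c1; cases p; cases q; cases r; cases t) simp_all

lemma bit_left_kernel_det2:
  fixes x0 x1 p q r t :: bit
  assumes "x0*p + x1*r = 0" "x0*q + x1*t = 0" "p*t + q*r = 1"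
  shows "x0 = 0 \<and> x1 = 0"
  using assms by (cases x0; cases x1; cases p; cases q; cases r; cases t) simp_all

lemma bit_det2_vanish_on_basis:
  fixes x y p q r t :: bit
  assumes "x*q + y*p = 0" "x*t + y*r = 0" "p*t + q*r = 1"
  shows "x = 0 \<and> y = 0"
  using assms by (cases x; cases y; cases p; cases q; cases r; cases t) simp_all

lemma bit_det2_adjugate:
  fixes p q r t e g :: bit
  assumes "p*t + q*r = 1"
  shows "p*(t*e + q*g) + q*(r*e + p*g) + e = 0" "r*(t*e + q*g) + t*(r*e + p*g) + g = 0"
  using assms by (cases p; cases q; cases r; cases t; cases e; cases g; simp)+

lemma mult_add_less_mult:
  fixes i r k b :: nat
  assumes "i < b" and "r < k"
  shows "i * k + r < b * k"
proof -
  have "i * k + r < (i + 1) * k" using assms(2) by simp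
  also have "\<dots> \<le> b * k" using assms(1) by (intro mult_right_mono) auto
  finally show ?thesis .
qed

locale circ_block_setup =
  fixes s b :: nat and bb :: "bit vec" and L :: "bit mat"
  assumes s_ge_3: "3 \<le> s" and bb_carrier: "bb \<in> carrier_vec (s - 2)"
    and L_carrier: "L \<in> carrier_mat (s * b) (s * b)"
begin

abbreviation n where "n \<equiv> s * b"
abbreviation d where "d \<equiv> s - 2"
abbreviation circ where "circ \<equiv> par_circ s b bb"

lemma s_gt [simp]: "0 < s" "1 < s" "Suc 0 < s" "2 < s" "0 < d" "s \<noteq> 0"
  using s_ge_3 by auto

lemma dim_L [simp]: "dim_row L = n" "dim_col L = n"
  using L_carrier by auto

lemma block_index_less: "i < b \<Longrightarrow> r < s \<Longrightarrow> i * s + r < n"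
  using mult_add_less_mult by (simp add: mult.commute)

lemma block_start_less [simp]: "i < b \<Longrightarrow> i * s < n"
  using block_index_less[of i 0] by simp

lemma block_succ_less [simp]: "i < b \<Longrightarrow> Suc (i * s) < n"
  using block_index_less[of i 1] by simp

lemma block_index_div [simp]: "r < s \<Longrightarrow> (i * s + r) div s = i"
  by simp

lemma block_index_mod [simp]: "r < s \<Longrightarrow> (i * s + r) mod s = r"
  by simp

lemma block_index_eq_iff:
  "r < s \<Longrightarrow> r' < s \<Longrightarrow> i * s + r = j * s + r' \<longleftrightarrow> i = j \<and> r = r'"
  by (metis block_index_div block_index_mod)

lemma block_div_less: "p < n \<Longrightarrow> p div s < b"
  by (simp add: less_mult_imp_div_less mult.commute)

lemma low_coord_cases: "p mod s < 2 \<Longrightarrow> p = p div s * s \<or> p = p div s * s + 1"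
proof -
  assume "p mod s < 2"
  moreover have "p = p div s * s + p mod s" by simp
  ultimately show ?thesis by linarith
qed

lemma block_start_neq_succ: "i * s \<noteq> j * s + 1"
proof
  assume "i * s = j * s + 1"
  then have "(i * s + 0) mod s = (j * s + 1) mod s" by (simp only: add_0_right)
  then show False by (simp only: block_index_mod[OF s_gt(1)] block_index_mod[OF s_gt(2)])
qed

lemma block_pair_eq_iff: "{j * s, j * s + 1} = {i * s, i * s + 1} \<longleftrightarrow> i = j"
  using block_start_neq_succ[of j i] by (auto simp: doubleton_eq_iff)

lemma doubleton_eq_block_pair:
  assumes "{p, q} = {j * s, j * s + 1}" and "q = i * s \<or> q = i * s + 1"
  shows "p = i * s \<or> p = i * s + 1"
  using assms block_start_neq_succ[of i j] block_start_neq_succ[of j i]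
  by (auto simp: doubleton_eq_iff)

text \<open>The coordinates of \<open>V\<close> carrying the blocks \<open>D\<^sub>i\<^sub>j\<close>: the \<open>r\<close>-th row (or column) of
  \<open>fullD s b L\<close> is the row (or column) \<open>D_index r\<close> of \<open>L\<close>.\<close>

definition D_index :: "nat \<Rightarrow> nat" where
  "D_index r = r div d * s + 2 + r mod d"

definition D_coord :: "nat \<Rightarrow> nat" where
  "D_coord p = p div s * d + (p mod s - 2)"

lemma D_offset_less: "2 + r mod d < s"
  using mod_less_divisor[of d r] s_gt(4) by linarith

lemma D_coord_offset_less: "p mod s - 2 < d"
  using mod_less_divisor[of s p] s_ge_3 by linarith

lemma D_index_eq: "D_index r = r div d * s + (2 + r mod d)"
  unfolding D_index_def by (rule add.assoc)

lemma D_index_mod: "D_index r mod s = 2 + r mod d"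
  unfolding D_index_eq by (rule block_index_mod[OF D_offset_less])

lemma D_index_div: "D_index r div s = r div d"
  unfolding D_index_eq by (rule block_index_div[OF D_offset_less])

lemma D_index_less: "r < b * d \<Longrightarrow> D_index r < n"
  unfolding D_index_eq by (rule block_index_less[OF _ D_offset_less]) (simp add: less_mult_imp_div_less)

lemma D_coord_D_index [simp]: "D_coord (D_index r) = r"
  by (simp add: D_coord_def D_index_mod D_index_div div_mult_mod_eq)

lemma D_index_D_coord: "2 \<le> p mod s \<Longrightarrow> D_index (D_coord p) = p"
proof -
  assume p: "2 \<le> p mod s"
  have "D_coord p div d = p div s" "D_coord p mod d = p mod s - 2"
    using D_coord_offset_less[of p] by (simp_all add: D_coord_def)
  then have "D_index (D_coord p) = p div s * s + (2 + (p mod s - 2))"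
    by (simp add: D_index_eq)
  also have "\<dots> = p" using p div_mult_mod_eq[of p s] by linarith
  finally show ?thesis .
qed

lemma D_coord_less: "p < n \<Longrightarrow> D_coord p < b * d"
proof -
  assume "p < n"
  moreover have "p mod s - 2 < d" by (rule D_coord_offset_less)
  ultimately show ?thesis
    unfolding D_coord_def using mult_add_less_mult block_div_less by blast
qed

lemma fullD_carrier: "fullD s b L \<in> carrier_mat (b * d) (b * d)"
  by (simp add: fullD_def)

lemma dim_fullD [simp]: "dim_row (fullD s b L) = b * d" "dim_col (fullD s b L) = b * d"
  by (simp_all add: fullD_def)

lemma fullD_nth:
  "r < b * d \<Longrightarrow> c < b * d \<Longrightarrow> fullD s b L $$ (r, c) = L $$ (D_index r, D_index c)"
  by (simp add: fullD_def blkD_def D_index_def)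

definition lift_D :: "bit vec \<Rightarrow> bit vec" where
  "lift_D u = vec n (\<lambda>p. if 2 \<le> p mod s then u $ D_coord p else 0)"

definition restrict_D :: "bit vec \<Rightarrow> bit vec" where
  "restrict_D x = vec (b * d) (\<lambda>r. x $ D_index r)"

lemma lift_D_carrier [simp]: "lift_D u \<in> carrier_vec n"
  by (simp add: lift_D_def)

lemma lift_D_D_index [simp]: "r < b * d \<Longrightarrow> lift_D u $ D_index r = u $ r"
  by (simp add: lift_D_def D_index_less D_index_mod)

lemma lift_D_zero [simp]: "lift_D (0\<^sub>v (b * d)) = 0\<^sub>v n"
  using D_coord_less by (intro eq_vecI) (simp_all add: lift_D_def)

lemma restrict_D_zero [simp]: "restrict_D (0\<^sub>v n) = 0\<^sub>v (b * d)"
  by (intro eq_vecI) (simp_all add: restrict_D_def D_index_less)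

lemma restrict_lift_D: "u \<in> carrier_vec (b * d) \<Longrightarrow> restrict_D (lift_D u) = u"
  by (intro eq_vecI) (simp_all add: restrict_D_def)

lemma lift_restrict_D:
  assumes x: "x \<in> carrier_vec n" and low: "\<And>p. p < n \<Longrightarrow> p mod s < 2 \<Longrightarrow> x $ p = 0"
  shows "lift_D (restrict_D x) = x"
proof (rule eq_vecI)
  fix p assume "p < dim_vec x"
  then have p: "p < n" using x by simp
  show "lift_D (restrict_D x) $ p = x $ p"
    using low[OF p] D_coord_less[OF p] D_index_D_coord
    by (simp add: lift_D_def restrict_D_def p)
qed (use x in simp)

lemma sum_lift_D: "(\<Sum>p<n. lift_D u $ p * g p) = (\<Sum>r<b * d. u $ r * g (D_index r))"
proof -
  have inj: "inj_on D_index {..<b * d}"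
    by (rule inj_on_inverseI[where g = D_coord]) simp
  have "(\<Sum>p<n. lift_D u $ p * g p) = (\<Sum>p\<in>D_index ` {..<b * d}. lift_D u $ p * g p)"
  proof (rule sum.mono_neutral_right)
    show "D_index ` {..<b * d} \<subseteq> {..<n}" using D_index_less by auto
    show "\<forall>p\<in>{..<n} - D_index ` {..<b * d}. lift_D u $ p * g p = 0"
    proof
      fix p assume p: "p \<in> {..<n} - D_index ` {..<b * d}"
      have "\<not> 2 \<le> p mod s"
      proof
        assume "2 \<le> p mod s"
        then have "p = D_index (D_coord p)" by (simp add: D_index_D_coord)
        then show False using p D_coord_less by blast
      qed
      then show "lift_D u $ p * g p = 0" using p by (simp add: lift_D_def)
    qed
  qed simp
  also have "\<dots> = (\<Sum>r<b * d. lift_D u $ D_index r * g (D_index r))"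
    by (simp add: sum.reindex[OF inj])
  also have "\<dots> = (\<Sum>r<b * d. u $ r * g (D_index r))"
    by (intro sum.cong) simp_all
  finally show ?thesis .
qed

definition lmul :: "bit vec \<Rightarrow> bit vec" where
  "lmul x = row_mult x L"

lemma lmul_carrier [simp]: "lmul x \<in> carrier_vec n"
  by (simp add: lmul_def row_mult_def)

lemma dim_lmul [simp]: "dim_vec (lmul x) = n"
  by (simp add: lmul_def row_mult_def)

lemma lmul_nth: "x \<in> carrier_vec n \<Longrightarrow> m < n \<Longrightarrow> lmul x $ m = (\<Sum>p<n. x $ p * L $$ (p, m))"
  unfolding lmul_def row_mult_def
  by (auto simp: scalar_prod_def lessThan_atLeast0 intro!: sum.cong)

lemma lmul_add: "x \<in> carrier_vec n \<Longrightarrow> y \<in> carrier_vec n \<Longrightarrow> lmul (x + y) = lmul x + lmul y"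
  by (rule eq_vecI) (auto simp: lmul_nth sum.distrib distrib_right)

lemma lmul_zero [simp]: "lmul (0\<^sub>v n) = 0\<^sub>v n"
  by (rule eq_vecI) (auto simp: lmul_nth)

lemma lmul_unit_vec: "p < n \<Longrightarrow> m < n \<Longrightarrow> lmul (unit_vec n p) $ m = L $$ (p, m)"
proof -
  assume p: "p < n" and m: "m < n"
  have "lmul (unit_vec n p) $ m = (\<Sum>q<n. if q = p then L $$ (q, m) else 0)"
    unfolding lmul_nth[OF unit_vec_carrier m] by (intro sum.cong) (auto simp: unit_vec_def)
  then show ?thesis using p by simp
qed

lemma blkC_nth: "r < d \<Longrightarrow> c < 2 \<Longrightarrow> blkC s L i j $$ (r, c) = L $$ (i * s + 2 + r, j * s + c)"
  by (simp add: blkC_def)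

lemma blkC_zero_entry:
  assumes C: "\<forall>i<b. \<forall>j<b. blkC s L i j = 0\<^sub>m d 2"
    and p: "p < n" "2 \<le> p mod s" and m: "m < n" "m mod s < 2"
  shows "L $$ (p, m) = 0"
proof -
  have p_eq: "p div s * s + 2 + (p mod s - 2) = p"
    using p(2) div_mult_mod_eq[of p s] by linarith
  have "0 = blkC s L (p div s) (m div s) $$ (p mod s - 2, m mod s)"
    using C block_div_less[OF p(1)] block_div_less[OF m(1)] D_coord_offset_less m(2) by simp
  also have "\<dots> = L $$ (p div s * s + 2 + (p mod s - 2), m div s * s + m mod s)"
    using D_coord_offset_less m(2) by (rule blkC_nth)
  also have "\<dots> = L $$ (p, m)"
    by (simp only: p_eq div_mult_mod_eq)
  finally show ?thesis by simp
qed

lemma lmul_lift_D: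
  assumes C: "\<forall>i<b. \<forall>j<b. blkC s L i j = 0\<^sub>m d 2" and u: "u \<in> carrier_vec (b * d)"
  shows "lmul (lift_D u) = lift_D (row_mult u (fullD s b L))"
proof (rule eq_vecI)
  fix m assume "m < dim_vec (lift_D (row_mult u (fullD s b L)))"
  then have m: "m < n" by (simp add: lift_D_def)
  have "lmul (lift_D u) $ m = (\<Sum>r<b * d. u $ r * L $$ (D_index r, m))"
    by (simp add: lmul_nth[OF lift_D_carrier m] sum_lift_D)
  also have "\<dots> = lift_D (row_mult u (fullD s b L)) $ m"
  proof (cases "2 \<le> m mod s")
    case True
    have c: "D_coord m < b * d" using m by (rule D_coord_less)
    have "(\<Sum>r<b * d. u $ r * L $$ (D_index r, m)) = (\<Sum>r<b * d. u $ r * fullD s b L $$ (r, D_coord m))"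
      by (intro sum.cong) (simp_all add: fullD_nth c D_index_D_coord[OF True])
    also have "\<dots> = row_mult u (fullD s b L) $ D_coord m"
      using u c by (simp add: row_mult_def fullD_carrier scalar_prod_def lessThan_atLeast0)
    finally show ?thesis using True m by (simp add: lift_D_def)
  next
    case False
    have "L $$ (D_index r, m) = 0" if "r < b * d" for r
      using blkC_zero_entry[OF C D_index_less[OF that] _ m] False by (simp add: D_index_mod)
    then show ?thesis using False m by (simp add: lift_D_def)
  qed
  finally show "lmul (lift_D u) $ m = lift_D (row_mult u (fullD s b L)) $ m" .
qed (simp add: lift_D_def)

text \<open>In the notation of the proof idea, \<open>omega i\<close> is \<open>\<omega>\<^sub>i\<close>, \<open>twist_image i\<close> is \<open>e\<^sub>i L\<close> and
  \<open>minor k p q\<close> is the determinant of the submatrix of \<open>L\<close> in the rows \<open>p, q\<close> and the columns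
  \<open>k s, k s + 1\<close>.\<close>

definition omega :: "nat \<Rightarrow> bit vec \<Rightarrow> bit vec \<Rightarrow> bit" where
  "omega i x y = x $ (i * s) * y $ (i * s + 1) + x $ (i * s + 1) * y $ (i * s)"

definition twist_image :: "nat \<Rightarrow> nat \<Rightarrow> bit" where
  "twist_image i m = (\<Sum>t<d. bb $ t * L $$ (i * s + 2 + t, m))"

definition minor :: "nat \<Rightarrow> nat \<Rightarrow> nat \<Rightarrow> bit" where
  "minor k p q = L $$ (p, k * s) * L $$ (q, k * s + 1) + L $$ (p, k * s + 1) * L $$ (q, k * s)"

lemma minor_sym: "minor k p q = minor k q p"
  by (simp add: minor_def ac_simps)

lemma circ_carrier [simp]: "circ x y \<in> carrier_vec n"
  by (simp add: par_circ_def)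

lemma circ_nth:
  assumes "m < n"
  shows "circ x y $ m = x $ m + y $ m
    + (if 2 \<le> m mod s then omega (m div s) x y * bb $ (m mod s - 2) else 0)"
  using assms by (simp add: par_circ_def circ_b_def block_def omega_def ac_simps)

lemma lmul_circ_nth:
  assumes x: "x \<in> carrier_vec n" and y: "y \<in> carrier_vec n" and m: "m < n"
  shows "lmul (circ x y) $ m = lmul x $ m + lmul y $ m + (\<Sum>i<b. omega i x y * twist_image i m)"
proof -
  let ?h = "\<lambda>p. (if 2 \<le> p mod s then omega (p div s) x y * bb $ (p mod s - 2) else 0) * L $$ (p, m)"
  have "lmul (circ x y) $ m = (\<Sum>p<n. x $ p * L $$ (p, m) + y $ p * L $$ (p, m) + ?h p)"
    using m by (auto simp: lmul_nth circ_nth distrib_right intro!: sum.cong)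
  also have "\<dots> = lmul x $ m + lmul y $ m + (\<Sum>p<n. ?h p)"
    using x y m by (simp add: lmul_nth sum.distrib)
  also have "(\<Sum>p<n. ?h p) = (\<Sum>i<b. \<Sum>r<s. ?h (i * s + r))"
    by (rule sum_lessThan_mult_blocks)
  also have "\<dots> = (\<Sum>i<b. omega i x y * twist_image i m)"
  proof (rule sum.cong[OF refl])
    fix i
    have h0: "?h (i * s + 0) = 0" by (simp only: block_index_mod[OF s_gt(1)]) simp
    have h1: "?h (i * s + 1) = 0" by (simp only: block_index_mod[OF s_gt(2)]) simp
    have ht: "?h (i * s + (t + 2)) = omega i x y * (bb $ t * L $$ (i * s + 2 + t, m))" if "t < d" for t
    proof -
      have "t + 2 < s" using that by linarith
      then show ?thesis
        by (simp only: block_index_mod block_index_div) (simp add: ac_simps)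
    qed
    have "(\<Sum>r<s. ?h (i * s + r)) = ?h (i * s + 0) + ?h (i * s + 1) + (\<Sum>t<d. ?h (i * s + (t + 2)))"
      by (rule sum_lessThan_drop_first_two) (use s_ge_3 in simp)
    also have "\<dots> = (\<Sum>t<d. omega i x y * (bb $ t * L $$ (i * s + 2 + t, m)))"
      unfolding h0 h1 add_0_left by (rule sum.cong[OF refl], rule ht, simp)
    finally show "(\<Sum>r<s. ?h (i * s + r)) = omega i x y * twist_image i m"
      by (simp add: twist_image_def sum_distrib_left)
  qed
  finally show ?thesis .
qed

lemma lmul_circ_iff_twist:
  assumes x: "x \<in> carrier_vec n" and y: "y \<in> carrier_vec n"
  shows "lmul (circ x y) = circ (lmul x) (lmul y) \<longleftrightarrow>
    (\<forall>m<n. (\<Sum>i<b. omega i x y * twist_image i m) =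
       (if 2 \<le> m mod s then omega (m div s) (lmul x) (lmul y) * bb $ (m mod s - 2) else 0))"
proof -
  have "lmul (circ x y) = circ (lmul x) (lmul y) \<longleftrightarrow>
      (\<forall>m<n. lmul (circ x y) $ m = circ (lmul x) (lmul y) $ m)"
    by (metis carrier_vecD eq_vecI lmul_carrier circ_carrier)
  then show ?thesis
    using x y by (simp add: lmul_circ_nth circ_nth add.assoc)
qed

lemma omega_unit_vec:
  assumes "p < n" "q < n" "i < b"
  shows "omega i (unit_vec n p) (unit_vec n q) = (if {p, q} = {i * s, i * s + 1} then 1 else 0)"
  using assms by (auto simp: omega_def doubleton_eq_iff)

lemma omega_lmul_unit_vec:
  "p < n \<Longrightarrow> q < n \<Longrightarrow> k < b \<Longrightarrow>
    omega k (lmul (unit_vec n p)) (lmul (unit_vec n q)) = minor k p q"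
  by (simp add: omega_def minor_def lmul_unit_vec)

definition col_pair_within :: "nat \<Rightarrow> nat \<Rightarrow> bool" where
  "col_pair_within k i \<longleftrightarrow>
     (\<forall>q<n. q \<noteq> i * s \<longrightarrow> q \<noteq> i * s + 1 \<longrightarrow> L $$ (q, k * s) = 0 \<and> L $$ (q, k * s + 1) = 0)"

lemma col_pair_withinD:
  "col_pair_within k i \<Longrightarrow> q < n \<Longrightarrow> q \<noteq> i * s \<Longrightarrow> q \<noteq> i * s + 1 \<Longrightarrow>
    L $$ (q, k * s) = 0 \<and> L $$ (q, k * s + 1) = 0"
  by (simp add: col_pair_within_def)

lemma lmul_nth_col_pair_within:
  assumes within: "col_pair_within k i" and x: "x \<in> carrier_vec n"
    and i: "i < b" and k: "k < b" and c: "c < 2"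
  shows "lmul x $ (k * s + c) =
    x $ (i * s) * L $$ (i * s, k * s + c) + x $ (i * s + 1) * L $$ (i * s + 1, k * s + c)"
proof -
  have "c < s" using c s_ge_3 by linarith
  then have m: "k * s + c < n" by (rule block_index_less[OF k])
  have "lmul x $ (k * s + c) = (\<Sum>p\<in>{i * s, i * s + 1}. x $ p * L $$ (p, k * s + c))"
    unfolding lmul_nth[OF x m]
  proof (intro sum.mono_neutral_right)
    show "{i * s, i * s + 1} \<subseteq> {..<n}" using i by simp
    show "\<forall>p\<in>{..<n} - {i * s, i * s + 1}. x $ p * L $$ (p, k * s + c) = 0"
      using within c by (auto simp: col_pair_within_def less_2_cases_iff)
  qed auto
  then show ?thesis by simp
qed

lemma omega_lmul_col_pair_within:
  assumes within: "col_pair_within k i" and x: "x \<in> carrier_vec n" and y: "y \<in> carrier_vec n"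
    and i: "i < b" and k: "k < b"
  shows "omega k (lmul x) (lmul y) = omega i x y * minor k (i * s) (i * s + 1)"
  using lmul_nth_col_pair_within[OF within x i k, of 0] lmul_nth_col_pair_within[OF within x i k, of 1]
    lmul_nth_col_pair_within[OF within y i k, of 0] lmul_nth_col_pair_within[OF within y i k, of 1]
  by (simp add: omega_def minor_def bit_det2_mult)

lemma col_pair_within_minor_eq_zero:
  "col_pair_within k i \<Longrightarrow> j < b \<Longrightarrow> j \<noteq> i \<Longrightarrow> minor k (j * s) (j * s + 1) = 0"
  using col_pair_withinD[of k i "j * s"] col_pair_withinD[of k i "j * s + 1"]
    block_start_neq_succ[of j i] block_start_neq_succ[of i j]
  by (simp add: minor_def)

lemma blkA_carrier: "blkA s L i k \<in> carrier_mat 2 2"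
  by (simp add: blkA_def)

lemma blkA_eq_zero_iff:
  "blkA s L i k = 0\<^sub>m 2 2 \<longleftrightarrow> L $$ (i * s, k * s) = 0 \<and> L $$ (i * s, k * s + 1) = 0
    \<and> L $$ (i * s + 1, k * s) = 0 \<and> L $$ (i * s + 1, k * s + 1) = 0"
  by (auto simp: blkA_def mat_eq_iff less_2_cases_iff)

lemma blkA_invertible_iff: "invertible_mat (blkA s L i k) \<longleftrightarrow> minor k (i * s) (i * s + 1) = 1"
  unfolding invertible_mat_2_bit[OF blkA_carrier] by (simp add: blkA_def minor_def)

lemma minor_eq_zero_if_blkA_eq_zero:
  "blkA s L i k = 0\<^sub>m 2 2 \<Longrightarrow> minor k (i * s) (i * s + 1) = 0"
  by (simp add: blkA_eq_zero_iff minor_def)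

lemma col_pair_within_blkA_eq_zero:
  "col_pair_within k i \<Longrightarrow> j < b \<Longrightarrow> j \<noteq> i \<Longrightarrow> blkA s L j k = 0\<^sub>m 2 2"
  using col_pair_withinD[of k i "j * s"] col_pair_withinD[of k i "j * s + 1"]
    block_start_neq_succ[of j i] block_start_neq_succ[of i j]
  by (simp add: blkA_eq_zero_iff)

lemma col_pair_within_blkC_eq_zero:
  assumes within: "col_pair_within k i" and j: "j < b"
  shows "blkC s L j k = 0\<^sub>m d 2"
proof (rule eq_matI)
  fix r c assume "r < dim_row (0\<^sub>m d 2)" "c < dim_col (0\<^sub>m d 2)"
  then have r: "2 + r < s" and c: "c < 2" by auto
  have q: "j * s + (2 + r) < n" using block_index_less[OF j r] .
  have "j * s + (2 + r) \<noteq> i * s + 0" "j * s + (2 + r) \<noteq> i * s + 1"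
    using block_index_eq_iff[OF r, of 0 j i] block_index_eq_iff[OF r, of 1 j i] by auto
  then have "L $$ (j * s + (2 + r), k * s) = 0 \<and> L $$ (j * s + (2 + r), k * s + 1) = 0"
    using col_pair_withinD[OF within q] by simp
  then show "blkC s L j k $$ (r, c) = 0\<^sub>m d 2 $$ (r, c)"
    using r c by (auto simp: blkC_def less_2_cases_iff add.assoc)
qed (simp_all add: blkC_def)

text \<open>The law \<open>e\<^sub>i L = \<Sum>\<^sub>k det A\<^sub>i\<^sub>k \<cdot> e\<^sub>k\<close>, in coordinates.\<close>

definition twist_law :: bool where
  "twist_law \<longleftrightarrow> (\<forall>i<b. \<forall>m<n. twist_image i m =
     (if 2 \<le> m mod s then minor (m div s) (i * s) (i * s + 1) * bb $ (m mod s - 2) else 0))"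

lemma twist_lawD:
  "twist_law \<Longrightarrow> i < b \<Longrightarrow> m < n \<Longrightarrow> twist_image i m =
    (if 2 \<le> m mod s then minor (m div s) (i * s) (i * s + 1) * bb $ (m mod s - 2) else 0)"
  by (simp add: twist_law_def)

lemma row_mult_bb_blkD_nth:
  "t < d \<Longrightarrow> row_mult bb (blkD s L i k) $ t = twist_image i (k * s + 2 + t)"
  using bb_carrier unfolding row_mult_def blkD_def twist_image_def
  by (auto simp: scalar_prod_def lessThan_atLeast0 intro!: sum.cong)

lemma twist_image_eq_zero_if_blkC_eq_zero:
  assumes C: "\<forall>i<b. \<forall>j<b. blkC s L i j = 0\<^sub>m d 2" and i: "i < b" and m: "m < n" "m mod s < 2"
  shows "twist_image i m = 0"
  unfolding twist_image_def
proof (intro sum.neutral ballI)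
  fix t assume "t \<in> {..<d}"
  then have t: "2 + t < s" by auto
  have "L $$ (i * s + (2 + t), m) = 0"
    using blkC_zero_entry[OF C block_index_less[OF i t] _ m] block_index_mod[OF t] by simp
  then show "bb $ t * L $$ (i * s + 2 + t, m) = 0" by (simp add: add.assoc)
qed

lemma bb_blkD_if_twist_law:
  assumes tw: twist_law and i: "i < b" and k: "k < b"
  shows "row_mult bb (blkD s L i k) = minor k (i * s) (i * s + 1) \<cdot>\<^sub>v bb"
proof (rule eq_vecI)
  fix t assume "t < dim_vec (minor k (i * s) (i * s + 1) \<cdot>\<^sub>v bb)"
  then have t: "2 + t < s" "t < d" using bb_carrier by auto
  have m: "k * s + (2 + t) < n" using block_index_less[OF k t(1)] .
  have "row_mult bb (blkD s L i k) $ t = twist_image i (k * s + (2 + t))"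
    using row_mult_bb_blkD_nth[OF t(2)] by (simp add: add.assoc)
  also have "\<dots> = minor k (i * s) (i * s + 1) * bb $ t"
    using twist_lawD[OF tw i m] block_index_mod[OF t(1)] block_index_div[OF t(1)] by simp
  finally show "row_mult bb (blkD s L i k) $ t = (minor k (i * s) (i * s + 1) \<cdot>\<^sub>v bb) $ t"
    using t(2) bb_carrier by simp
qed (use bb_carrier in \<open>simp add: row_mult_def blkD_def\<close>)

lemma twist_law_if_bb_blkD_eq_smult:
  assumes C: "\<forall>i<b. \<forall>j<b. blkC s L i j = 0\<^sub>m d 2"
    and bbD: "\<And>i k. i < b \<Longrightarrow> k < b \<Longrightarrow> row_mult bb (blkD s L i k) = minor k (i * s) (i * s + 1) \<cdot>\<^sub>v bb"
  shows twist_law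
  unfolding twist_law_def
proof (intro allI impI)
  fix i m assume i: "i < b" and m: "m < n"
  show "twist_image i m =
    (if 2 \<le> m mod s then minor (m div s) (i * s) (i * s + 1) * bb $ (m mod s - 2) else 0)"
  proof (cases "2 \<le> m mod s")
    case True
    have "m div s * s + 2 + (m mod s - 2) = m"
      using True div_mult_mod_eq[of m s] by linarith
    then have "twist_image i m = row_mult bb (blkD s L i (m div s)) $ (m mod s - 2)"
      using row_mult_bb_blkD_nth[OF D_coord_offset_less, of i "m div s" m] by simp
    then show ?thesis
      using True bbD[OF i block_div_less[OF m]] D_coord_offset_less bb_carrier by simp
  qed (use twist_image_eq_zero_if_blkC_eq_zero[OF C i m] in simp)
qed

end

locale circ_automorphism = circ_block_setup +
  assumes bb_nonzero: "bb \<noteq> 0\<^sub>v (s - 2)"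
    and lmul_circ: "\<And>x y. x \<in> carrier_vec (s * b) \<Longrightarrow> y \<in> carrier_vec (s * b) \<Longrightarrow>
      lmul (circ x y) = circ (lmul x) (lmul y)"
    and lmul_inj: "inj_on lmul (carrier_vec (s * b))"
begin

lemma twist_identity:
  assumes "x \<in> carrier_vec n" "y \<in> carrier_vec n" "m < n"
  shows "(\<Sum>i<b. omega i x y * twist_image i m) =
    (if 2 \<le> m mod s then omega (m div s) (lmul x) (lmul y) * bb $ (m mod s - 2) else 0)"
  using lmul_circ[OF assms(1,2)] lmul_circ_iff_twist[OF assms(1,2)] assms(3) by blast

lemma bb_nonzero_entry:
  obtains t where "t < d" "bb $ t = 1"
proof -
  obtain t where "t < d" "bb $ t \<noteq> 0"
    using bb_nonzero bb_carrier by (metis carrier_vecD eq_vecI index_zero_vec(1,2))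
  then show thesis using that by simp
qed

lemma minor_eq_zero_off_block_pairs:
  assumes p: "p < n" and q: "q < n" and k: "k < b"
    and off: "\<forall>i<b. {p, q} \<noteq> {i * s, i * s + 1}"
  shows "minor k p q = 0"
proof -
  obtain t where t: "t < d" "bb $ t = 1" by (rule bb_nonzero_entry)
  have r: "2 + t < s" using t(1) by linarith
  have m: "k * s + (2 + t) < n" using block_index_less[OF k r] .
  have m_mod: "(k * s + (2 + t)) mod s = 2 + t" using r by (rule block_index_mod)
  have m_div: "(k * s + (2 + t)) div s = k" using r by (rule block_index_div)
  have "(\<Sum>i<b. omega i (unit_vec n p) (unit_vec n q) * twist_image i (k * s + (2 + t))) = 0"
    using off by (simp add: omega_unit_vec p q)
  then have "omega k (lmul (unit_vec n p)) (lmul (unit_vec n q)) * bb $ t = 0"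
    using twist_identity[OF unit_vec_carrier unit_vec_carrier m] m_mod m_div by simp
  then show ?thesis using t(2) omega_lmul_unit_vec[OF p q k] by simp
qed

lemma twist_image_eq:
  assumes j: "j < b" and m: "m < n"
  shows "twist_image j m =
    (if 2 \<le> m mod s then minor (m div s) (j * s) (j * s + 1) * bb $ (m mod s - 2) else 0)"
proof -
  have p: "j * s < n" "j * s + 1 < n" using j by simp_all
  have "omega i (unit_vec n (j * s)) (unit_vec n (j * s + 1)) * twist_image i m
      = (if i = j then twist_image i m else 0)" if "i < b" for i
    using omega_unit_vec[OF p that] block_pair_eq_iff[of j i] by simp
  then have "(\<Sum>i<b. omega i (unit_vec n (j * s)) (unit_vec n (j * s + 1)) * twist_image i m)
      = twist_image j m"
    using j by simp
  then show ?thesis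
    using twist_identity[of "unit_vec n (j * s)" "unit_vec n (j * s + 1)" m] m block_div_less[OF m]
      omega_lmul_unit_vec[OF p] by simp
qed

lemma L_invertible: "invertible_mat L"
  unfolding invertible_mat_iff_row_mult_inj[OF L_carrier]
proof (intro ballI impI)
  fix u assume u: "u \<in> carrier_vec n" and "row_mult u L = 0\<^sub>v n"
  then have "lmul u = 0\<^sub>v n" by (simp add: lmul_def)
  then have "lmul u = lmul (0\<^sub>v n)" by simp
  then show "u = 0\<^sub>v n" using inj_onD[OF lmul_inj _ u zero_carrier_vec] by blast
qed

lemma col_pair_independent:
  assumes k: "k < b" and nz: "\<alpha> \<noteq> 0 \<or> \<beta> \<noteq> 0"
  obtains q where "q < n" "L $$ (q, k * s) * \<alpha> + L $$ (q, k * s + 1) * \<beta> \<noteq> 0"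
proof -
  define w where "w = vec n (\<lambda>m. if m = k * s then \<alpha> else if m = k * s + 1 then \<beta> else 0)"
  have w: "w \<in> carrier_vec n" by (simp add: w_def)
  have Lw: "(L *\<^sub>v w) $ q = L $$ (q, k * s) * \<alpha> + L $$ (q, k * s + 1) * \<beta>" if "q < n" for q
  proof -
    have "(L *\<^sub>v w) $ q = (\<Sum>m\<in>{k * s, k * s + 1}. L $$ (q, m) * w $ m)"
      by (rule mult_mat_vec_nth_support[OF L_carrier w that]) (use k in \<open>auto simp: w_def\<close>)
    then show ?thesis using k by (simp add: w_def)
  qed
  have "w \<noteq> 0\<^sub>v n"
  proof
    assume "w = 0\<^sub>v n"
    then have "w $ (k * s) = 0" "w $ (k * s + 1) = 0" using k by simp_all
    then show False using nz k by (simp add: w_def)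
  qed
  then have "L *\<^sub>v w \<noteq> 0\<^sub>v n"
    using invertible_mat_mult_vec_eq_zero[OF L_carrier L_invertible w] by blast
  then obtain q where "q < n" "(L *\<^sub>v w) $ q \<noteq> 0"
    by (metis dim_L(1) dim_mult_mat_vec eq_vecI index_zero_vec)
  then show thesis using that Lw by auto
qed

lemma column_structure:
  assumes k: "k < b"
  obtains i where "i < b" "minor k (i * s) (i * s + 1) = 1" "col_pair_within k i"
proof -
  obtain p where p: "p < n" "L $$ (p, k * s) \<noteq> 0"
    using col_pair_independent[OF k, of 1 0] by auto
  obtain q where q: "q < n" "minor k q p = 1"
    using col_pair_independent[OF k, of "L $$ (p, k * s + 1)" "L $$ (p, k * s)"] p(2)
    by (auto simp: minor_def ac_simps)
  obtain i where i: "i < b" "{q, p} = {i * s, i * s + 1}"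
    using minor_eq_zero_off_block_pairs[OF q(1) p(1) k] q(2) by auto
  have det: "minor k (i * s) (i * s + 1) = 1"
    using q(2) i(2) minor_sym by (auto simp: doubleton_eq_iff)
  have "col_pair_within k i"
    unfolding col_pair_within_def
  proof (intro allI impI)
    fix r assume r: "r < n" "r \<noteq> i * s" "r \<noteq> i * s + 1"
    have "\<forall>j<b. {r, i * s} \<noteq> {j * s, j * s + 1}" "\<forall>j<b. {r, i * s + 1} \<noteq> {j * s, j * s + 1}"
      using doubleton_eq_block_pair[of r "i * s" _ i] doubleton_eq_block_pair[of r "i * s + 1" _ i]
        r(2,3) by blast+
    then have "minor k r (i * s) = 0" "minor k r (i * s + 1) = 0"
      using minor_eq_zero_off_block_pairs[OF r(1) _ k] i(1) by simp_all
    then show "L $$ (r, k * s) = 0 \<and> L $$ (r, k * s + 1) = 0"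
      using bit_det2_vanish_on_basis det unfolding minor_def by blast
  qed
  then show thesis using that i(1) det by blast
qed

lemma twist_law_holds: twist_law
  unfolding twist_law_def using twist_image_eq by blast

definition owner :: "nat \<Rightarrow> nat" where
  "owner k = (SOME i. i < b \<and> minor k (i * s) (i * s + 1) = 1 \<and> col_pair_within k i)"

lemma owner:
  assumes "k < b"
  shows "owner k < b" "minor k (owner k * s) (owner k * s + 1) = 1" "col_pair_within k (owner k)"
proof -
  obtain i where "i < b \<and> minor k (i * s) (i * s + 1) = 1 \<and> col_pair_within k i"
    using column_structure[OF assms] by blast
  then have "owner k < b \<and> minor k (owner k * s) (owner k * s + 1) = 1 \<and> col_pair_within k (owner k)"
    unfolding owner_def by (rule someI)
  then show "owner k < b" "minor k (owner k * s) (owner k * s + 1) = 1" "col_pair_within k (owner k)"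
    by auto
qed

lemma blkA_nonzero_iff_owner:
  assumes i: "i < b" and k: "k < b"
  shows "blkA s L i k \<noteq> 0\<^sub>m 2 2 \<longleftrightarrow> i = owner k"
proof
  show "i = owner k" if "blkA s L i k \<noteq> 0\<^sub>m 2 2"
    using that col_pair_within_blkA_eq_zero[OF owner(3)[OF k] i] by blast
  show "blkA s L i k \<noteq> 0\<^sub>m 2 2" if "i = owner k"
    using that owner(2)[OF k] minor_eq_zero_if_blkA_eq_zero[of i k] by auto
qed

text \<open>The vector \<open>w\<close> below is a dependency among the columns \<open>k s, k s + 1, k' s\<close> of \<open>L\<close>, all
  supported on the rows \<open>i s, i s + 1\<close>; its entries come from the adjugate of \<open>A\<^sub>i\<^sub>k\<close>.\<close>

lemma col_pair_within_unique:
  assumes i: "i < b" and k: "k < b" and k': "k' < b"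
    and det: "minor k (i * s) (i * s + 1) = 1"
    and within: "col_pair_within k i" and within': "col_pair_within k' i"
  shows "k' = k"
proof (rule ccontr)
  assume "k' \<noteq> k"
  then have ks: "k * s \<noteq> k' * s" "k * s + 1 \<noteq> k' * s"
    using block_start_neq_succ[of k' k] by auto
  define p where "p = L $$ (i * s, k * s)"
  define q where "q = L $$ (i * s, k * s + 1)"
  define r where "r = L $$ (i * s + 1, k * s)"
  define t where "t = L $$ (i * s + 1, k * s + 1)"
  define e where "e = L $$ (i * s, k' * s)"
  define g where "g = L $$ (i * s + 1, k' * s)"
  have ptqr: "p * t + q * r = 1" using det by (simp add: minor_def p_def q_def r_def t_def)
  define w where "w = vec n (\<lambda>m. if m = k * s then t * e + q * g
    else if m = k * s + 1 then r * e + p * g else if m = k' * s then 1 else 0)"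
  have w: "w \<in> carrier_vec n" by (simp add: w_def)
  have "L *\<^sub>v w = 0\<^sub>v n"
  proof (rule eq_vecI)
    fix x assume "x < dim_vec (0\<^sub>v n)"
    then have x: "x < n" by simp
    have "(L *\<^sub>v w) $ x = (\<Sum>m\<in>{k * s, k * s + 1, k' * s}. L $$ (x, m) * w $ m)"
      by (rule mult_mat_vec_nth_support[OF L_carrier w x]) (use k k' in \<open>auto simp: w_def\<close>)
    also have "\<dots> = L $$ (x, k * s) * (t * e + q * g) + L $$ (x, k * s + 1) * (r * e + p * g)
        + L $$ (x, k' * s)"
      using ks k k' by (simp add: w_def add.assoc)
    also have "\<dots> = 0"
    proof (cases "x = i * s \<or> x = i * s + 1")
      case True
      then show ?thesis
        using bit_det2_adjugate[OF ptqr, of e g] by (auto simp: p_def q_def r_def t_def e_def g_def)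
    next
      case False
      then show ?thesis
        using col_pair_withinD[OF within x] col_pair_withinD[OF within' x] by simp
    qed
    finally show "(L *\<^sub>v w) $ x = 0\<^sub>v n $ x" using x by simp
  qed simp
  then have "w = 0\<^sub>v n" using invertible_mat_mult_vec_eq_zero[OF L_carrier L_invertible w] by blast
  then have "w $ (k' * s) = 0" using k' by simp
  then show False using ks k' by (simp add: w_def)
qed

lemma owner_bij: "bij_betw owner {..<b} {..<b}"
proof -
  have "inj_on owner {..<b}"
  proof (rule inj_onI)
    fix k k' assume k: "k \<in> {..<b}" and k': "k' \<in> {..<b}" and eq: "owner k = owner k'"
    have kb: "k < b" and k'b: "k' < b" using k k' by simp_all
    have "col_pair_within k' (owner k)" using owner(3)[OF k'b] eq by simp
    then show "k = k'"
      using col_pair_within_unique[OF owner(1)[OF kb] kb k'b owner(2)[OF kb] owner(3)[OF kb]] by simp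
  qed
  moreover have "owner ` {..<b} \<subseteq> {..<b}" using owner(1) by auto
  ultimately show ?thesis by (simp add: bij_betw_def endo_inj_surj)
qed

lemma unique_nonzero_blkA_in_row:
  assumes i: "i < b"
  shows "\<exists>!k. k < b \<and> blkA s L i k \<noteq> 0\<^sub>m 2 2"
proof -
  have "i \<in> owner ` {..<b}" using owner_bij i unfolding bij_betw_def by simp
  then obtain k where k: "k < b" "i = owner k" by auto
  show ?thesis
  proof (rule ex1I[of _ k])
    show "k < b \<and> blkA s L i k \<noteq> 0\<^sub>m 2 2" using k blkA_nonzero_iff_owner[OF i] by simp
    fix k' assume k': "k' < b \<and> blkA s L i k' \<noteq> 0\<^sub>m 2 2"
    then have "i = owner k'" using blkA_nonzero_iff_owner[OF i] by blast
    then have "owner k' = owner k" using k(2) by simp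
    then show "k' = k" using owner_bij k k' unfolding bij_betw_def inj_on_def by simp
  qed
qed

lemma unique_nonzero_blkA_in_col:
  assumes k: "k < b"
  shows "\<exists>!i. i < b \<and> blkA s L i k \<noteq> 0\<^sub>m 2 2"
proof (rule ex1I[of _ "owner k"])
  show "owner k < b \<and> blkA s L (owner k) k \<noteq> 0\<^sub>m 2 2"
    using blkA_nonzero_iff_owner[OF owner(1)[OF k] k] owner(1)[OF k] by blast
  show "i = owner k" if "i < b \<and> blkA s L i k \<noteq> 0\<^sub>m 2 2" for i
    using that blkA_nonzero_iff_owner[OF _ k] by blast
qed

lemma nonzero_blkA_invertible:
  assumes "i < b" "k < b" "blkA s L i k \<noteq> 0\<^sub>m 2 2"
  shows "invertible_mat (blkA s L i k)"
proof -
  have "i = owner k" using assms blkA_nonzero_iff_owner by blast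
  then show ?thesis using owner(2)[OF assms(2)] blkA_invertible_iff[of i k] by simp
qed

lemma blkC_eq_zero: "\<forall>i<b. \<forall>k<b. blkC s L i k = 0\<^sub>m d 2"
  using col_pair_within_blkC_eq_zero[OF owner(3)] by blast

lemma bb_blkD:
  assumes "i < b" "k < b"
  shows "(blkA s L i k = 0\<^sub>m 2 2 \<longrightarrow> row_mult bb (blkD s L i k) = 0\<^sub>v d)
    \<and> (invertible_mat (blkA s L i k) \<longrightarrow> row_mult bb (blkD s L i k) = bb)"
proof -
  have "row_mult bb (blkD s L i k) = minor k (i * s) (i * s + 1) \<cdot>\<^sub>v bb"
    using bb_blkD_if_twist_law[OF twist_law_holds assms] .
  then show ?thesis
    using minor_eq_zero_if_blkA_eq_zero[of i k] blkA_invertible_iff[of i k] zero_smult_vec[OF bb_carrier]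
    by auto
qed

lemma fullD_invertible: "invertible_mat (fullD s b L)"
  unfolding invertible_mat_iff_row_mult_inj[OF fullD_carrier]
proof (intro ballI impI)
  fix u assume u: "u \<in> carrier_vec (b * d)" and "row_mult u (fullD s b L) = 0\<^sub>v (b * d)"
  then have "lmul (lift_D u) = lmul (0\<^sub>v n)"
    using lmul_lift_D[OF blkC_eq_zero u] by simp
  then have "lift_D u = 0\<^sub>v n" using inj_onD[OF lmul_inj] by simp
  then show "u = 0\<^sub>v (b * d)" using restrict_lift_D[OF u] by simp
qed

end

context circ_block_setup
begin

lemma col_pair_within_if_blkC_eq_zero:
  assumes C: "\<forall>i<b. \<forall>j<b. blkC s L i j = 0\<^sub>m d 2" and i: "i < b" and k: "k < b"
    and others: "\<And>j. j < b \<Longrightarrow> j \<noteq> i \<Longrightarrow> blkA s L j k = 0\<^sub>m 2 2"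
  shows "col_pair_within k i"
  unfolding col_pair_within_def
proof (intro allI impI)
  fix q assume q: "q < n" "q \<noteq> i * s" "q \<noteq> i * s + 1"
  show "L $$ (q, k * s) = 0 \<and> L $$ (q, k * s + 1) = 0"
  proof (cases "2 \<le> q mod s")
    case True
    have "(k * s + 0) mod s = 0" "(k * s + 1) mod s = 1"
      by (rule block_index_mod, simp)+
    then show ?thesis using blkC_zero_entry[OF C q(1) True] k by simp
  next
    case False
    define j where "j = q div s"
    have j: "j < b" using block_div_less[OF q(1)] by (simp add: j_def)
    have qj: "q = j * s \<or> q = j * s + 1" using low_coord_cases False by (simp add: j_def)
    then have "j \<noteq> i" using q(2,3) by auto
    then have "blkA s L j k = 0\<^sub>m 2 2" using others j by simp
    then show ?thesis using qj by (auto simp: blkA_eq_zero_iff)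
  qed
qed

lemma lmul_circ_if_twist_law:
  assumes cols: "\<forall>k<b. \<exists>i<b. minor k (i * s) (i * s + 1) = 1 \<and> col_pair_within k i"
    and tw: twist_law and x: "x \<in> carrier_vec n" and y: "y \<in> carrier_vec n"
  shows "lmul (circ x y) = circ (lmul x) (lmul y)"
  unfolding lmul_circ_iff_twist[OF x y]
proof (intro allI impI)
  fix m assume m: "m < n"
  show "(\<Sum>j<b. omega j x y * twist_image j m) =
    (if 2 \<le> m mod s then omega (m div s) (lmul x) (lmul y) * bb $ (m mod s - 2) else 0)"
  proof (cases "2 \<le> m mod s")
    case False
    then show ?thesis using twist_lawD[OF tw _ m] by simp
  next
    case True
    define k where "k = m div s"
    have k: "k < b" using block_div_less[OF m] by (simp add: k_def)
    obtain i where i: "i < b" "minor k (i * s) (i * s + 1) = 1" "col_pair_within k i"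
      using cols k by blast
    have "(\<Sum>j<b. omega j x y * twist_image j m) = (\<Sum>j\<in>{i}. omega j x y * twist_image j m)"
    proof (rule sum.mono_neutral_right)
      show "\<forall>j\<in>{..<b} - {i}. omega j x y * twist_image j m = 0"
        using twist_lawD[OF tw _ m] col_pair_within_minor_eq_zero[OF i(3)] True
        by (simp add: k_def)
    qed (use i in auto)
    also have "\<dots> = omega i x y * bb $ (m mod s - 2)"
      using twist_lawD[OF tw i(1) m] True i(2) by (simp add: k_def)
    also have "\<dots> = omega k (lmul x) (lmul y) * bb $ (m mod s - 2)"
      using omega_lmul_col_pair_within[OF i(3) x y i(1) k] i(2) by simp
    finally show ?thesis using True by (simp add: k_def)
  qed
qed

lemma lmul_eq_zero_imp_zero:
  assumes rows: "\<forall>i<b. \<exists>k<b. minor k (i * s) (i * s + 1) = 1 \<and> col_pair_within k i"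
    and C: "\<forall>i<b. \<forall>j<b. blkC s L i j = 0\<^sub>m d 2" and D: "invertible_mat (fullD s b L)"
    and x: "x \<in> carrier_vec n" and x0: "lmul x = 0\<^sub>v n"
  shows "x = 0\<^sub>v n"
proof -
  have low: "x $ p = 0" if p: "p < n" "p mod s < 2" for p
  proof -
    define i where "i = p div s"
    have i: "i < b" using block_div_less[OF p(1)] by (simp add: i_def)
    obtain k where k: "k < b" "minor k (i * s) (i * s + 1) = 1" "col_pair_within k i"
      using rows i by blast
    have "x $ (i * s) * L $$ (i * s, k * s + c) + x $ (i * s + 1) * L $$ (i * s + 1, k * s + c) = 0"
      if c: "c < 2" for c
    proof -
      have "c < s" using c s_ge_3 by linarith
      then have "lmul x $ (k * s + c) = 0" using x0 block_index_less[OF k(1)] by simp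
      then show ?thesis using lmul_nth_col_pair_within[OF k(3) x i k(1) c] by simp
    qed
    from this[of 0] this[of 1] have "x $ (i * s) = 0 \<and> x $ (i * s + 1) = 0"
      by (intro bit_left_kernel_det2) (use k(2) in \<open>simp_all add: minor_def\<close>)
    then show ?thesis using low_coord_cases[OF p(2)] by (auto simp: i_def)
  qed
  have x_lift: "lift_D (restrict_D x) = x" by (rule lift_restrict_D[OF x low])
  have restrict: "restrict_D x \<in> carrier_vec (b * d)" by (simp add: restrict_D_def)
  have "lift_D (row_mult (restrict_D x) (fullD s b L)) = lift_D (0\<^sub>v (b * d))"
    using lmul_lift_D[OF C restrict] x_lift x0 by simp
  then have "row_mult (restrict_D x) (fullD s b L) = 0\<^sub>v (b * d)"
    using restrict_lift_D[of "row_mult (restrict_D x) (fullD s b L)"] restrict_lift_D[of "0\<^sub>v (b * d)"]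
    by (simp add: row_mult_def)
  then have "restrict_D x = 0\<^sub>v (b * d)"
    using D restrict invertible_mat_iff_row_mult_inj[OF fullD_carrier] by blast
  then show ?thesis using x_lift by simp
qed

lemma bij_betw_lmul_if_kernel_trivial:
  assumes ker: "\<And>x. x \<in> carrier_vec n \<Longrightarrow> lmul x = 0\<^sub>v n \<Longrightarrow> x = 0\<^sub>v n"
  shows "bij_betw lmul (carrier_vec n) (carrier_vec n)"
proof -
  have inj: "inj_on lmul (carrier_vec n)"
  proof (rule inj_onI)
    fix x y assume x: "x \<in> carrier_vec n" and y: "y \<in> carrier_vec n" and eq: "lmul x = lmul y"
    have "lmul (x + y) = 0\<^sub>v n"
      using lmul_add[OF x y] eq by (intro eq_vecI) simp_all
    then have "x + y = 0\<^sub>v n" using ker x y by simp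
    then show "x = y" using x y by (intro eq_vecI) (auto simp: vec_eq_iff bit_add_eq_0_iff)
  qed
  moreover have "lmul ` carrier_vec n = carrier_vec n"
    by (rule endo_inj_surj[OF finite_carrier_vec[OF finite_UNIV_bit] _ inj]) auto
  ultimately show ?thesis by (simp add: bij_betw_def)
qed

lemma twist_law_if_bb_blkD:
  assumes C: "\<forall>i<b. \<forall>k<b. blkC s L i k = 0\<^sub>m d 2"
    and inv: "\<forall>i<b. \<forall>k<b. blkA s L i k \<noteq> 0\<^sub>m 2 2 \<longrightarrow> invertible_mat (blkA s L i k)"
    and bbD: "\<forall>i<b. \<forall>k<b. (blkA s L i k = 0\<^sub>m 2 2 \<longrightarrow> row_mult bb (blkD s L i k) = 0\<^sub>v d)
      \<and> (invertible_mat (blkA s L i k) \<longrightarrow> row_mult bb (blkD s L i k) = bb)"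
  shows twist_law
proof (rule twist_law_if_bb_blkD_eq_smult[OF C])
  fix i k assume i: "i < b" and k: "k < b"
  show "row_mult bb (blkD s L i k) = minor k (i * s) (i * s + 1) \<cdot>\<^sub>v bb"
  proof (cases "blkA s L i k = 0\<^sub>m 2 2")
    case True
    then show ?thesis
      using bbD i k minor_eq_zero_if_blkA_eq_zero[of i k] zero_smult_vec[OF bb_carrier] by simp
  next
    case False
    then show ?thesis using bbD inv i k blkA_invertible_iff[of i k] by simp
  qed
qed

lemma lmul_in_H_circ:
  assumes col: "\<forall>k<b. \<exists>!i. i < b \<and> blkA s L i k \<noteq> 0\<^sub>m 2 2"
    and row: "\<forall>i<b. \<exists>k<b. blkA s L i k \<noteq> 0\<^sub>m 2 2"
    and inv: "\<forall>i<b. \<forall>k<b. blkA s L i k \<noteq> 0\<^sub>m 2 2 \<longrightarrow> invertible_mat (blkA s L i k)"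
    and C: "\<forall>i<b. \<forall>k<b. blkC s L i k = 0\<^sub>m d 2"
    and bbD: "\<forall>i<b. \<forall>k<b. (blkA s L i k = 0\<^sub>m 2 2 \<longrightarrow> row_mult bb (blkD s L i k) = 0\<^sub>v d)
      \<and> (invertible_mat (blkA s L i k) \<longrightarrow> row_mult bb (blkD s L i k) = bb)"
    and D: "invertible_mat (fullD s b L)"
  shows "lmul \<in> H_circ (carrier_vec n) circ"
proof -
  have owner: "minor k (i * s) (i * s + 1) = 1 \<and> col_pair_within k i"
    if i: "i < b" and k: "k < b" and nz: "blkA s L i k \<noteq> 0\<^sub>m 2 2" for i k
  proof
    show "minor k (i * s) (i * s + 1) = 1" using inv i k nz blkA_invertible_iff by blast
    have "blkA s L j k = 0\<^sub>m 2 2" if j: "j < b" "j \<noteq> i" for j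
    proof (rule ccontr)
      assume "blkA s L j k \<noteq> 0\<^sub>m 2 2"
      then show False using col[rule_format, OF k] i j nz by blast
    qed
    then show "col_pair_within k i" by (rule col_pair_within_if_blkC_eq_zero[OF C i k])
  qed
  have cols: "\<forall>k<b. \<exists>i<b. minor k (i * s) (i * s + 1) = 1 \<and> col_pair_within k i"
    using col owner by blast
  have rows: "\<forall>i<b. \<exists>k<b. minor k (i * s) (i * s + 1) = 1 \<and> col_pair_within k i"
    using row owner by blast
  have "bij_betw lmul (carrier_vec n) (carrier_vec n)"
    by (rule bij_betw_lmul_if_kernel_trivial) (rule lmul_eq_zero_imp_zero[OF rows C D])
  then show ?thesis
    unfolding H_circ_def using lmul_add lmul_circ_if_twist_law[OF cols twist_law_if_bb_blkD[OF C inv bbD]]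
    by blast
qed

end

theorem theorem5:
  fixes s b :: nat and bb :: "bit vec" and L :: "bit mat"
  assumes "s \<ge> 3" and "b \<ge> 1"
    and "bb \<in> carrier_vec (s - 2)" and "bb \<noteq> 0\<^sub>v (s - 2)"
    and "L \<in> carrier_mat (s * b) (s * b)"
  shows "(\<lambda>x. row_mult x L) \<in> H_circ (carrier_vec (s * b)) (par_circ s b bb)
    \<longleftrightarrow>
      ((\<forall>i<b. \<exists>!j. j < b \<and> blkA s L i j \<noteq> 0\<^sub>m 2 2)
       \<and> (\<forall>j<b. \<exists>!i. i < b \<and> blkA s L i j \<noteq> 0\<^sub>m 2 2)
       \<and> (\<forall>i<b. \<forall>j<b. blkA s L i j \<noteq> 0\<^sub>m 2 2 \<longrightarrow> invertible_mat (blkA s L i j))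
       \<and> (\<forall>i<b. \<forall>j<b. blkB s L i j \<in> carrier_mat 2 (s - 2))
       \<and> (\<forall>i<b. \<forall>j<b. blkC s L i j = 0\<^sub>m (s - 2) 2)
       \<and> (\<forall>i<b. \<forall>j<b.
            (blkA s L i j = 0\<^sub>m 2 2 \<longrightarrow> row_mult bb (blkD s L i j) = 0\<^sub>v (s - 2))
          \<and> (invertible_mat (blkA s L i j) \<longrightarrow> row_mult bb (blkD s L i j) = bb))
       \<and> invertible_mat (fullD s b L))"
proof -
  interpret circ_block_setup s b bb L
    using assms by unfold_locales auto
  have "(\<lambda>x. row_mult x L) = lmul" by (simp add: fun_eq_iff lmul_def)
  then show ?thesis
  proof (simp only:, intro iffI, goal_cases)
    case 1
    interpret circ_automorphism s b bb L
      using 1 assms(4) unfolding H_circ_def bij_betw_def by unfold_locales auto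
    show ?case
      using unique_nonzero_blkA_in_row unique_nonzero_blkA_in_col nonzero_blkA_invertible
        blkC_eq_zero bb_blkD fullD_invertible
      by (simp add: blkB_def)
  next
    case 2
    then show ?case by (elim conjE) (rule lmul_in_H_circ; blast)
  qed
qed

end
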